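(* Let $X$ be an irreducible shift space which is eventually dendric with threshold $m$. Then for every $w\in\mathcal L(X)$ the set $\mathcal R_X(w)$ is finite. Moreover, for every $w\in\mathcal L_{\ge m}(X)$, $$\mathrm{Card}\,\mathcal R_X(w)=1+\rho_X(\mathcal L_m(X)).$$
   Context: $A$ is a finite alphabet; a shift space is a closed shift-invariant subset $X\subseteq A^{\mathbb Z}$; $\mathcal L(X)$ is its set of finite factors (including the empty word), $\mathcal L_n(X)=\mathcal L(X)\cap A^n$, $\mathcal L_{\ge n}(X)=\bigcup_{k\ge n}\mathcal L_k(X)$. $X$ is irreducible if for all $u,v\in\mathcal L(X)$ there is $w$ with $uwv\in\mathcal L(X)$. For $w\in\mathcal L(X)$, the extension graph $\mathcal E_1(w)$ is the undirected bipartite graph with vertex set the disjoint union of $\{a\in A: aw\in\mathcal L(X)\}$ and $R_1(w)=\{b\in A: wb\in\mathcal L(X)\}$, with an edge $(a,b)$ iff $awb\in\mathcal L(X)$; $X$ is eventually dendric with threshold $m$ if $\mathcal E_1(w)$ is a tree for every $w\in\mathcal L_{\ge m}(X)$. $\rho_X(w)=\mathrm{Card}\,R_1(w)-1$ and $\rho_X(W)=\sum_{w\in W}\rho_X(w)$. A complete return word to $w$ is a word of $\mathcal L(X)$ having exactly two factors equal to $w$, one as a proper prefix and one as a proper suffix; $\mathcal R_X(w)$, the set of (right) return words to $w$, is the set of words $u$ such that $wu$ is a complete return word to $w$. *)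

theory Defs
  imports Main
begin

definition shift :: "(int \<Rightarrow> 'a) \<Rightarrow> (int \<Rightarrow> 'a)" where
  "shift x = (\<lambda>i. x (i + 1))"

text \<open>Closedness in the product topology of the discrete alphabet: a point all of whose
  central windows agree with points of X belongs to X.\<close>
definition closed_shift_set :: "(int \<Rightarrow> 'a) set \<Rightarrow> bool" where
  "closed_shift_set X \<longleftrightarrow>
     (\<forall>x. (\<forall>n::nat. \<exists>y\<in>X. \<forall>i. \<bar>i\<bar> \<le> int n \<longrightarrow> y i = x i) \<longrightarrow> x \<in> X)"

definition shift_space :: "'a set \<Rightarrow> (int \<Rightarrow> 'a) set \<Rightarrow> bool" where
  "shift_space A X \<longleftrightarrow> finite A \<and> X \<subseteq> {x. \<forall>i. x i \<in> A}
     \<and> closed_shift_set X \<and> shift ` X = X"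

definition occurs_at :: "'a list \<Rightarrow> (int \<Rightarrow> 'a) \<Rightarrow> int \<Rightarrow> bool" where
  "occurs_at w x i \<longleftrightarrow> (\<forall>k<length w. x (i + int k) = w ! k)"

definition lang :: "(int \<Rightarrow> 'a) set \<Rightarrow> 'a list set" where
  "lang X = {w. \<exists>x\<in>X. \<exists>i. occurs_at w x i}"

definition lang_n :: "(int \<Rightarrow> 'a) set \<Rightarrow> nat \<Rightarrow> 'a list set" where
  "lang_n X n = {w \<in> lang X. length w = n}"

definition lang_ge :: "(int \<Rightarrow> 'a) set \<Rightarrow> nat \<Rightarrow> 'a list set" where
  "lang_ge X n = {w \<in> lang X. n \<le> length w}"

definition irreducible_shift :: "(int \<Rightarrow> 'a) set \<Rightarrow> bool" where
  "irreducible_shift X \<longleftrightarrow> (\<forall>u\<in>lang X. \<forall>v\<in>lang X. \<exists>w. u @ w @ v \<in> lang X)"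

definition left_ext :: "(int \<Rightarrow> 'a) set \<Rightarrow> 'a list \<Rightarrow> 'a set" where
  "left_ext X w = {a. a # w \<in> lang X}"

definition right_ext :: "(int \<Rightarrow> 'a) set \<Rightarrow> 'a list \<Rightarrow> 'a set" where
  "right_ext X w = {b. w @ [b] \<in> lang X}"

text \<open>Extension graph E_1(w): vertices are the disjoint union (Inl for left letters,
  Inr for right letters), undirected edges between Inl a and Inr b iff a w b is in L(X).\<close>
definition ext_vertices :: "(int \<Rightarrow> 'a) set \<Rightarrow> 'a list \<Rightarrow> ('a + 'a) set" where
  "ext_vertices X w = Inl ` left_ext X w \<union> Inr ` right_ext X w"

definition ext_adj :: "(int \<Rightarrow> 'a) set \<Rightarrow> 'a list \<Rightarrow> ('a + 'a) \<Rightarrow> ('a + 'a) \<Rightarrow> bool" where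
  "ext_adj X w u v \<longleftrightarrow>
     (\<exists>a b. a # w @ [b] \<in> lang X \<and> ((u = Inl a \<and> v = Inr b) \<or> (u = Inr b \<and> v = Inl a)))"

definition graph_connected :: "'v set \<Rightarrow> ('v \<Rightarrow> 'v \<Rightarrow> bool) \<Rightarrow> bool" where
  "graph_connected V E \<longleftrightarrow>
     (\<forall>u\<in>V. \<forall>v\<in>V. \<exists>p. p \<noteq> [] \<and> hd p = u \<and> last p = v \<and> set p \<subseteq> V
        \<and> (\<forall>i. Suc i < length p \<longrightarrow> E (p ! i) (p ! Suc i)))"

definition graph_acyclic :: "'v set \<Rightarrow> ('v \<Rightarrow> 'v \<Rightarrow> bool) \<Rightarrow> bool" where
  "graph_acyclic V E \<longleftrightarrow>
     \<not> (\<exists>p. 3 \<le> length p \<and> distinct p \<and> set p \<subseteq> V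
        \<and> (\<forall>i. Suc i < length p \<longrightarrow> E (p ! i) (p ! Suc i)) \<and> E (last p) (hd p))"

definition graph_tree :: "'v set \<Rightarrow> ('v \<Rightarrow> 'v \<Rightarrow> bool) \<Rightarrow> bool" where
  "graph_tree V E \<longleftrightarrow> V \<noteq> {} \<and> graph_connected V E \<and> graph_acyclic V E"

definition ext_graph_is_tree :: "(int \<Rightarrow> 'a) set \<Rightarrow> 'a list \<Rightarrow> bool" where
  "ext_graph_is_tree X w \<longleftrightarrow> graph_tree (ext_vertices X w) (ext_adj X w)"

definition eventually_dendric :: "(int \<Rightarrow> 'a) set \<Rightarrow> nat \<Rightarrow> bool" where
  "eventually_dendric X m \<longleftrightarrow> (\<forall>w\<in>lang_ge X m. ext_graph_is_tree X w)"

definition rho :: "(int \<Rightarrow> 'a) set \<Rightarrow> 'a list \<Rightarrow> int" where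
  "rho X w = int (card (right_ext X w)) - 1"

definition rho_set :: "(int \<Rightarrow> 'a) set \<Rightarrow> 'a list set \<Rightarrow> int" where
  "rho_set X W = (\<Sum>w\<in>W. rho X w)"

definition word_occ :: "'a list \<Rightarrow> 'a list \<Rightarrow> nat set" where
  "word_occ w u = {i. i + length w \<le> length u \<and> take (length w) (drop i u) = w}"

definition complete_return_word :: "(int \<Rightarrow> 'a) set \<Rightarrow> 'a list \<Rightarrow> 'a list \<Rightarrow> bool" where
  "complete_return_word X w u \<longleftrightarrow> u \<in> lang X \<and> card (word_occ w u) = 2
     \<and> length w < length u
     \<and> take (length w) u = w \<and> drop (length u - length w) u = w"

definition return_words :: "(int \<Rightarrow> 'a) set \<Rightarrow> 'a list \<Rightarrow> 'a list set" where
  "return_words X w = {u. complete_return_word X w (w @ u)}"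

end

theory Submission
  imports Defs
begin

text \<open>Call \<open>p\<close> return-free for \<open>w\<close> if \<open>w p \<in> L(X)\<close> contains \<open>w\<close> only as a
  prefix, and let \<open>P(w)\<close> be the set of these words. The return words of \<open>w\<close> are exactly
  the one-letter extensions \<open>p b\<close> of words \<open>p \<in> P(w)\<close> that are no longer return-free, so
  for finite \<open>P(w)\<close> the number of return words is \<open>1 + \<Sum>{\<rho>(w p) | p \<in> P(w)}\<close>.

  If \<open>|y| \<ge> m\<close>, counting the edges \<open>a y b\<close> of the tree \<open>E\<^sub>1(y)\<close> gives
  \<open>\<rho>(y) = \<Sum>\<^sub>a \<rho>(a y)\<close>, hence \<open>\<rho>(L\<^sub>N) = \<rho>(L\<^sub>m)\<close> for \<open>N \<ge> m\<close>. Grouping the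
  words of \<open>L\<^sub>N\<close> by the return-free suffix after their last occurrence of \<open>w\<close> shows
  that the sum of \<open>\<rho>(w p)\<close> over any finite \<open>F \<subseteq> P(w)\<close> is at most \<open>\<rho>(L\<^sub>m)\<close>, with
  equality for \<open>F = P(w)\<close> as soon as \<open>w\<close> occurs in every long word of \<open>L(X)\<close>. By
  irreducibility, the latter property of \<open>w\<close> is equivalent to the finiteness of \<open>P(w)\<close>.

  Finiteness for \<open>|w| \<ge> m\<close>: by the inequality only finitely many \<open>p \<in> P(w)\<close> have
  \<open>\<rho>(w p) > 0\<close>. If \<open>P(w)\<close> were infinite, Koenig's lemma would give a \<open>p\<^sub>0 \<in> P(w)\<close>,
  longer than all of those, with return-free extensions of every length. Then every
  continuation of \<open>w p\<^sub>0\<close> is forced and stays return-free, which contradicts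
  irreducibility: some \<open>w p\<^sub>0 z w\<close> lies in \<open>L(X)\<close>. Shorter words inherit finiteness
  from their extensions of length \<open>m\<close>.\<close>

section \<open>Finite trees\<close>

definition edge_on :: "'v set \<Rightarrow> ('v \<Rightarrow> 'v \<Rightarrow> bool) \<Rightarrow> 'v \<Rightarrow> 'v \<Rightarrow> bool" where
  "edge_on V E u v \<longleftrightarrow> u \<in> V \<and> v \<in> V \<and> E u v"

lemma rtranclp_edge_on_if_path:
  "p \<noteq> [] \<Longrightarrow> set p \<subseteq> V \<Longrightarrow> successively E p \<Longrightarrow> (edge_on V E)\<^sup>*\<^sup>* (hd p) (last p)"
proof (induction p)
  case (Cons x xs)
  show ?case
  proof (cases xs)
    case (Cons y ys)
    with Cons.prems have "edge_on V E x y" "successively E xs"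
      by (auto simp: edge_on_def)
    with Cons.IH Cons.prems \<open>xs = y # ys\<close> show ?thesis
      by (auto intro: converse_rtranclp_into_rtranclp)
  qed simp
qed simp

lemma path_if_rtranclp_edge_on:
  assumes "(edge_on V E)\<^sup>*\<^sup>* u v" "v \<in> V"
  shows "\<exists>p. p \<noteq> [] \<and> hd p = u \<and> last p = v \<and> set p \<subseteq> V \<and> successively E p"
  using assms(1)
proof (induction rule: converse_rtranclp_induct)
  case base
  show ?case using assms(2) by (intro exI[of _ "[v]"]) auto
next
  case (step a b)
  then obtain p where "p \<noteq> []" "hd p = b" "last p = v" "set p \<subseteq> V" "successively E p"
    by auto
  with step.hyps(1) show ?case
    by (intro exI[of _ "a # p"]) (auto simp: edge_on_def successively_Cons)
qed

lemma graph_connected_iff_rtranclp: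
  "graph_connected V E \<longleftrightarrow> (\<forall>u\<in>V. \<forall>v\<in>V. (edge_on V E)\<^sup>*\<^sup>* u v)"
  unfolding graph_connected_def successively_conv_nth[symmetric]
proof (intro iffI ballI)
  fix u v assume "u \<in> V" "v \<in> V" and
    "\<forall>u\<in>V. \<forall>v\<in>V. \<exists>p. p \<noteq> [] \<and> hd p = u \<and> last p = v \<and> set p \<subseteq> V \<and> successively E p"
  then show "(edge_on V E)\<^sup>*\<^sup>* u v" using rtranclp_edge_on_if_path by metis
next
  fix u v assume "u \<in> V" "v \<in> V" and "\<forall>u\<in>V. \<forall>v\<in>V. (edge_on V E)\<^sup>*\<^sup>* u v"
  then show "\<exists>p. p \<noteq> [] \<and> hd p = u \<and> last p = v \<and> set p \<subseteq> V \<and> successively E p"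
    using path_if_rtranclp_edge_on by metis
qed

lemma graph_acyclic_iff_successively:
  "graph_acyclic V E \<longleftrightarrow>
     \<not> (\<exists>p. 3 \<le> length p \<and> distinct p \<and> set p \<subseteq> V \<and> successively E p \<and> E (last p) (hd p))"
  unfolding graph_acyclic_def successively_conv_nth ..

lemma graph_acyclic_subset: "V' \<subseteq> V \<Longrightarrow> graph_acyclic V E \<Longrightarrow> graph_acyclic V' E"
  unfolding graph_acyclic_def by (meson order_trans)

lemma acyclic_path_end_neighbour:
  assumes "graph_acyclic V E" and irrefl: "\<And>u. \<not> E u u"
    and p: "distinct p" "set p \<subseteq> V" "successively E p"
    and y: "y \<in> set p" "E (last p) y"
  shows "y = p ! (length p - 2)"
proof -
  from y(1) obtain i where i: "i < length p" "p ! i = y" by (auto simp: in_set_conv_nth)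
  have "i \<noteq> length p - 1"
  proof
    assume "i = length p - 1"
    moreover have "p \<noteq> []" using i(1) by auto
    ultimately have "y = last p" using i(2) by (simp add: last_conv_nth)
    then show False using y(2) irrefl by simp
  qed
  moreover have "\<not> i < length p - 2"
  proof
    assume "i < length p - 2"
    then have "3 \<le> length (drop i p)" "hd (drop i p) = y" "last (drop i p) = last p"
      using i by (auto simp: hd_drop_conv_nth)
    moreover have "successively E (drop i p)"
      using p(3) by (auto simp: successively_conv_nth)
    moreover have "distinct (drop i p)" "set (drop i p) \<subseteq> V"
      using p(1,2) by (auto dest: in_set_dropD)
    ultimately show False
      using assms(1) y(2) unfolding graph_acyclic_iff_successively by metis
  qed
  ultimately have "i = length p - 2" using i(1) by linarith
  then show ?thesis using i(2) by simp
qed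

lemma tree_has_leaf:
  assumes fin: "finite V" and tree: "graph_tree V E" and irrefl: "\<And>u. \<not> E u u"
    and two: "2 \<le> card V"
  shows "\<exists>l\<in>V. \<exists>n\<in>V. E l n \<and> (\<forall>y\<in>V. E l y \<longrightarrow> y = n)"
proof -
  define simple where "simple p \<longleftrightarrow> p \<noteq> [] \<and> distinct p \<and> set p \<subseteq> V \<and> successively E p" for p
  obtain v where "v \<in> V" using two by fastforce
  then have "simple [v]" by (simp add: simple_def)
  moreover have "length p < Suc (card V)" if "simple p" for p
  proof -
    have "length p = card (set p)" using that by (simp add: simple_def distinct_card)
    also have "\<dots> \<le> card V" using that fin by (simp add: simple_def card_mono)
    finally show ?thesis by simp
  qed
  ultimately obtain p where p: "simple p" and longest: "\<And>q. simple q \<Longrightarrow> length q \<le> length p"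
    using ex_has_greatest_nat[of simple "[v]" length] by blast
  define z where "z = last p"
  have zV: "z \<in> V" using p by (auto simp: simple_def z_def)
  have "y = p ! (length p - 2)" if "y \<in> V" "E z y" for y
  proof -
    have "y \<in> set p"
    proof (rule ccontr)
      assume "y \<notin> set p"
      with p that have "simple (p @ [y])"
        by (auto simp: simple_def z_def successively_append_iff)
      from longest[OF this] show False by simp
    qed
    then show ?thesis
      using acyclic_path_end_neighbour[of V E p y] tree irrefl p that
      by (auto simp: graph_tree_def simple_def z_def)
  qed
  moreover obtain u where u: "u \<in> V" "u \<noteq> z"
  proof -
    have "\<not> V \<subseteq> {z}" using two card_mono[of "{z}" V] by auto
    then show ?thesis using that by blast
  qed
  then have "(edge_on V E)\<^sup>*\<^sup>* z u"
    using tree zV by (auto simp: graph_tree_def graph_connected_iff_rtranclp)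
  then obtain y where "edge_on V E z y"
    using u(2) by (cases rule: converse_rtranclpE) auto
  ultimately show ?thesis using zV by (auto simp: edge_on_def)
qed

lemma graph_tree_remove_leaf:
  assumes tree: "graph_tree V E" and sym: "\<And>u v. E u v \<Longrightarrow> E v u"
    and leaf: "l \<in> V" "n \<in> V" "E l n" "n \<noteq> l" "\<forall>y\<in>V. E l y \<longrightarrow> y = n"
  shows "graph_tree (V - {l}) E"
proof -
  have reach: "(edge_on (V - {l}) E)\<^sup>*\<^sup>* u (if v = l then n else v)"
    if "(edge_on V E)\<^sup>*\<^sup>* u v" "u \<in> V - {l}" for u v
    using that(1)
  proof (induction rule: rtranclp_induct)
    case (step x y)
    then have xy: "x \<in> V" "y \<in> V" "E x y" by (auto simp: edge_on_def)
    consider "y = l" | "x = l" | "x \<noteq> l" "y \<noteq> l" by blast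
    then show ?case
    proof cases
      case 1
      then have "x = n" using xy leaf(5) sym by blast
      with 1 step.IH leaf(4) show ?thesis by simp
    next
      case 2
      then have "y = n" using xy leaf(5) by blast
      with 2 step.IH leaf(4) show ?thesis by simp
    next
      case 3
      then have "edge_on (V - {l}) E x y" using xy by (simp add: edge_on_def)
      with 3 step.IH show ?thesis by (simp add: rtranclp.rtrancl_into_rtrancl)
    qed
  qed (use that(2) in auto)
  have "graph_connected (V - {l}) E"
    unfolding graph_connected_iff_rtranclp
  proof (intro ballI)
    fix u v assume uv: "u \<in> V - {l}" "v \<in> V - {l}"
    then have "(edge_on V E)\<^sup>*\<^sup>* u v"
      using tree by (simp add: graph_tree_def graph_connected_iff_rtranclp)
    from reach[OF this uv(1)] uv(2) show "(edge_on (V - {l}) E)\<^sup>*\<^sup>* u v" by simp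
  qed
  moreover have "graph_acyclic (V - {l}) E"
    using tree graph_acyclic_subset[of "V - {l}" V E] by (simp add: graph_tree_def)
  ultimately show ?thesis unfolding graph_tree_def using leaf(2,4) by blast
qed

definition arcs :: "'v set \<Rightarrow> ('v \<Rightarrow> 'v \<Rightarrow> bool) \<Rightarrow> ('v \<times> 'v) set" where
  "arcs V E = {(u, v). u \<in> V \<and> v \<in> V \<and> E u v}"

lemma card_arcs_tree:
  assumes "finite V" "graph_tree V E"
    and sym: "\<And>u v. E u v \<Longrightarrow> E v u" and irrefl: "\<And>u. \<not> E u u"
  shows "card (arcs V E) + 2 = 2 * card V"
  using assms(1,2)
proof (induction "card V" arbitrary: V rule: less_induct)
  case less
  show ?case
  proof (cases "card V \<le> 1")
    case True
    moreover have "V \<noteq> {}" using less.prems(2) by (simp add: graph_tree_def)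
    ultimately have "card V = 1" using less.prems(1) by (simp add: le_Suc_eq)
    then obtain v where "V = {v}" by (rule card_1_singletonE)
    moreover have "arcs {v} E = {}" using irrefl by (auto simp: arcs_def)
    ultimately show ?thesis by simp
  next
    case False
    then have "2 \<le> card V" by simp
    then obtain l n where leaf: "l \<in> V" "n \<in> V" "E l n" "\<forall>y\<in>V. E l y \<longrightarrow> y = n"
      using tree_has_leaf[OF less.prems irrefl] by blast
    have "n \<noteq> l" using leaf(3) irrefl by blast
    have card_V: "card V = Suc (card (V - {l}))"
      using card_Suc_Diff1[OF less.prems(1) leaf(1)] by simp
    have "graph_tree (V - {l}) E"
      using graph_tree_remove_leaf[OF less.prems(2) sym leaf(1-3) \<open>n \<noteq> l\<close> leaf(4)] .
    then have "card (arcs (V - {l}) E) + 2 = 2 * card (V - {l})"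
      using less.hyps[of "V - {l}"] less.prems(1) card_V by simp
    moreover have "arcs V E = insert (l, n) (insert (n, l) (arcs (V - {l}) E))"
      using leaf sym[of l] sym[of _ l] unfolding arcs_def by blast
    moreover have "finite (arcs (V - {l}) E)"
      using less.prems(1) by (auto intro: finite_subset[of _ "V \<times> V"] simp: arcs_def)
    moreover have "(l, n) \<notin> arcs (V - {l}) E" "(n, l) \<notin> arcs (V - {l}) E"
      by (auto simp: arcs_def)
    ultimately show ?thesis using \<open>n \<noteq> l\<close> card_V by simp
  qed
qed

section \<open>Factors of a shift space\<close>

lemma occurs_at_append:
  "occurs_at (u @ v) x i \<longleftrightarrow> occurs_at u x i \<and> occurs_at v x (i + int (length u))"
  unfolding occurs_at_def
proof (intro iffI conjI allI impI)
  fix k assume "\<forall>k<length (u @ v). x (i + int k) = (u @ v) ! k"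
  then show "k < length u \<Longrightarrow> x (i + int k) = u ! k"
    and "k < length v \<Longrightarrow> x (i + int (length u) + int k) = v ! k"
    by (auto simp: nth_append add.assoc dest: spec[of _ k] spec[of _ "length u + k"])
next
  fix k
  assume H: "(\<forall>k<length u. x (i + int k) = u ! k)
    \<and> (\<forall>k<length v. x (i + int (length u) + int k) = v ! k)" and k: "k < length (u @ v)"
  show "x (i + int k) = (u @ v) ! k"
  proof (cases "k < length u")
    case False
    with k H[THEN conjunct2, rule_format, of "k - length u"] show ?thesis
      by (simp add: nth_append)
  qed (use H in \<open>simp add: nth_append\<close>)
qed

lemma lang_appendD: "u @ v \<in> lang X \<Longrightarrow> u \<in> lang X \<and> v \<in> lang X"
  unfolding lang_def by (blast dest: occurs_at_append[THEN iffD1])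

lemma lang_Cons_snocD: "a # u @ [b] \<in> lang X \<Longrightarrow> a # u \<in> lang X \<and> u @ [b] \<in> lang X"
  using lang_appendD[of "a # u" "[b]"] lang_appendD[of "[a]" "u @ [b]"] by simp

lemma lang_snoc_exists: "w \<in> lang X \<Longrightarrow> \<exists>b. w @ [b] \<in> lang X"
proof -
  assume "w \<in> lang X"
  then obtain x i where "x \<in> X" "occurs_at w x i" unfolding lang_def by blast
  moreover have "occurs_at [x (i + int (length w))] x (i + int (length w))"
    by (simp add: occurs_at_def)
  ultimately have "occurs_at (w @ [x (i + int (length w))]) x i"
    by (simp add: occurs_at_append)
  with \<open>x \<in> X\<close> show ?thesis unfolding lang_def by blast
qed

lemma lang_append_exists: "w \<in> lang X \<Longrightarrow> \<exists>t. length t = n \<and> w @ t \<in> lang X"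
proof (induction n)
  case (Suc n)
  then obtain t where "length t = n" "w @ t \<in> lang X" by blast
  with lang_snoc_exists[of "w @ t"] show ?case by (metis append.assoc length_append_singleton)
qed simp

lemma word_occ_finite: "finite (word_occ w u)"
  by (rule finite_subset[of _ "{..length u}"]) (auto simp: word_occ_def)

lemma word_occ_prefix: "0 \<in> word_occ w (w @ p)"
  by (simp add: word_occ_def)

lemma word_occ_middle: "length x \<in> word_occ w (x @ w @ p)"
  by (simp add: word_occ_def)

lemma word_occ_append_mono: "word_occ w u \<subseteq> word_occ w (u @ v)"
  by (auto simp: word_occ_def)

lemma word_occ_snoc: "i \<in> word_occ w (u @ [b]) \<Longrightarrow> i \<in> word_occ w u \<or> i + length w = Suc (length u)"
  by (auto simp: word_occ_def)

lemma word_occ_append_right: "j \<in> word_occ w v \<Longrightarrow> length u + j \<in> word_occ w (u @ v)"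
  by (auto simp: word_occ_def)

lemma word_occ_drop: "j \<in> word_occ w (drop i u) \<Longrightarrow> i \<le> length u \<Longrightarrow> i + j \<in> word_occ w u"
  by (auto simp: word_occ_def add.commute)

lemma word_occ_append_word: "i \<in> word_occ (w @ t) u \<Longrightarrow> i \<in> word_occ w u"
proof -
  assume "i \<in> word_occ (w @ t) u"
  then have "i + length (w @ t) \<le> length u" "take (length (w @ t)) (drop i u) = w @ t"
    by (auto simp: word_occ_def)
  moreover have "take (length w) (take (length (w @ t)) (drop i u)) = take (length w) (drop i u)"
    by (simp add: min_def)
  ultimately show ?thesis by (auto simp: word_occ_def)
qed

lemma word_occ_self: "word_occ w w = {0}"
  by (auto simp: word_occ_def)

locale finite_shift =
  fixes A :: "'a set" and X :: "(int \<Rightarrow> 'a) set"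
  assumes shift_space: "shift_space A X"
begin

lemma finite_alphabet: "finite A"
  using shift_space by (simp add: shift_space_def)

lemma lang_subset_alphabet:
  assumes "w \<in> lang X"
  shows "set w \<subseteq> A"
proof
  fix c assume "c \<in> set w"
  then obtain k where k: "k < length w" "w ! k = c" by (auto simp: in_set_conv_nth)
  obtain x i where "x \<in> X" "occurs_at w x i" using assms by (auto simp: lang_def)
  with k have "x \<in> X" "x (i + int k) = c" by (auto simp: occurs_at_def)
  with shift_space show "c \<in> A" by (auto simp: shift_space_def)
qed

lemma finite_right_ext: "finite (right_ext X w)"
proof (rule finite_subset[OF _ finite_alphabet])
  show "right_ext X w \<subseteq> A"
  proof
    fix b assume "b \<in> right_ext X w"
    from lang_subset_alphabet[of "w @ [b]"] this show "b \<in> A" by (simp add: right_ext_def)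
  qed
qed

lemma finite_left_ext: "finite (left_ext X w)"
proof (rule finite_subset[OF _ finite_alphabet])
  show "left_ext X w \<subseteq> A"
  proof
    fix a assume "a \<in> left_ext X w"
    from lang_subset_alphabet[of "a # w"] this show "a \<in> A" by (simp add: left_ext_def)
  qed
qed

lemma rho_nonneg: "w \<in> lang X \<Longrightarrow> 0 \<le> rho X w"
proof -
  assume "w \<in> lang X"
  then obtain b where "b \<in> right_ext X w"
    using lang_snoc_exists by (auto simp: right_ext_def)
  then have "card (right_ext X w) \<noteq> 0" using finite_right_ext[of w] by auto
  then show ?thesis by (simp add: rho_def)
qed

lemma finite_words_length_le: "finite {w \<in> lang X. length w \<le> n}"
proof (rule finite_subset[OF _ finite_lists_length_le[OF finite_alphabet, of n]])
  show "{w \<in> lang X. length w \<le> n} \<subseteq> {xs. set xs \<subseteq> A \<and> length xs \<le> n}"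
    using lang_subset_alphabet by blast
qed

lemma finite_lang_n: "finite (lang_n X n)"
  by (rule finite_subset[OF _ finite_words_length_le[of n]]) (auto simp: lang_n_def)

end

section \<open>Extension graphs\<close>

lemma ext_pair_iff: "(a, b) \<in> (SIGMA a:left_ext X y. right_ext X (a # y)) \<longleftrightarrow> a # y @ [b] \<in> lang X"
  using lang_Cons_snocD[of a y b X] by (auto simp: left_ext_def right_ext_def)

lemma arcs_ext_graph:
  "arcs (ext_vertices X y) (ext_adj X y) =
     (\<lambda>(a, b). (Inl a, Inr b)) ` (SIGMA a:left_ext X y. right_ext X (a # y))
     \<union> (\<lambda>(a, b). (Inr b, Inl a)) ` (SIGMA a:left_ext X y. right_ext X (a # y))"
  (is "_ = ?f ` ?P \<union> ?g ` ?P")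
proof (intro equalityI subsetI)
  fix e assume "e \<in> arcs (ext_vertices X y) (ext_adj X y)"
  then obtain u v where e: "e = (u, v)" "ext_adj X y u v" by (auto simp: arcs_def)
  then obtain a b where ab: "a # y @ [b] \<in> lang X" "(u, v) = ?f (a, b) \<or> (u, v) = ?g (a, b)"
    unfolding ext_adj_def by auto
  from ab(1) have "(a, b) \<in> ?P" by (simp only: ext_pair_iff)
  with ab(2) e(1) show "e \<in> ?f ` ?P \<union> ?g ` ?P" by blast
next
  fix e assume "e \<in> ?f ` ?P \<union> ?g ` ?P"
  then obtain a b where ab: "(a, b) \<in> ?P" "e = ?f (a, b) \<or> e = ?g (a, b)" by blast
  then have "a \<in> left_ext X y" "b \<in> right_ext X y" "a # y @ [b] \<in> lang X"
    using ext_pair_iff lang_Cons_snocD[of a y b X] by (auto simp: right_ext_def)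
  then have "Inl a \<in> ext_vertices X y" "Inr b \<in> ext_vertices X y"
    "ext_adj X y (Inl a) (Inr b)" "ext_adj X y (Inr b) (Inl a)"
    by (auto simp: ext_vertices_def ext_adj_def)
  with ab(2) show "e \<in> arcs (ext_vertices X y) (ext_adj X y)" by (auto simp: arcs_def)
qed

context finite_shift
begin

lemma card_arcs_ext_graph:
  "card (arcs (ext_vertices X y) (ext_adj X y)) = 2 * card (SIGMA a:left_ext X y. right_ext X (a # y))"
proof -
  let ?P = "SIGMA a:left_ext X y. right_ext X (a # y)"
  let ?f = "\<lambda>(a, b). (Inl a, Inr b) :: ('a + 'a) \<times> ('a + 'a)"
  let ?g = "\<lambda>(a, b). (Inr b, Inl a) :: ('a + 'a) \<times> ('a + 'a)"
  have fin: "finite ?P" using finite_left_ext finite_right_ext by simp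
  have "card (?f ` ?P) = card ?P" "card (?g ` ?P) = card ?P"
    by (auto intro!: card_image simp: inj_on_def)
  moreover have "?f ` ?P \<inter> ?g ` ?P = {}" by auto
  then have "card (?f ` ?P \<union> ?g ` ?P) = card (?f ` ?P) + card (?g ` ?P)"
    using fin by (simp add: card_Un_disjoint)
  ultimately show ?thesis unfolding arcs_ext_graph by simp
qed

lemma card_ext_vertices: "card (ext_vertices X y) = card (left_ext X y) + card (right_ext X y)"
proof -
  have "ext_vertices X y = left_ext X y <+> right_ext X y"
    by (simp add: ext_vertices_def Plus_def)
  then show ?thesis using finite_left_ext finite_right_ext by (simp add: card_Plus)
qed

end

locale eventually_dendric_shift = finite_shift +
  fixes m :: nat
  assumes eventually_dendric: "eventually_dendric X m"
begin

text \<open>The edges of \<open>E\<^sub>1(y)\<close> are the pairs \<open>(a, b)\<close> with \<open>a y b \<in> L(X)\<close>; a tree has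
  one edge fewer than vertices.\<close>

lemma rho_eq_sum_left_ext:
  assumes "y \<in> lang X" "m \<le> length y"
  shows "rho X y = (\<Sum>a\<in>left_ext X y. rho X (a # y))"
proof -
  let ?P = "SIGMA a:left_ext X y. right_ext X (a # y)"
  have tree: "graph_tree (ext_vertices X y) (ext_adj X y)"
    using eventually_dendric assms
    by (simp add: eventually_dendric_def ext_graph_is_tree_def lang_ge_def)
  have "finite (ext_vertices X y)"
    using finite_left_ext finite_right_ext by (simp add: ext_vertices_def)
  moreover have "ext_adj X y v u" if "ext_adj X y u v" for u v
    using that unfolding ext_adj_def by blast
  moreover have "\<not> ext_adj X y u u" for u
    unfolding ext_adj_def by auto
  ultimately have "card (arcs (ext_vertices X y) (ext_adj X y)) + 2 = 2 * card (ext_vertices X y)"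
    using card_arcs_tree[OF _ tree] by blast
  then have "card ?P + 1 = card (left_ext X y) + card (right_ext X y)"
    unfolding card_arcs_ext_graph card_ext_vertices by simp
  then have "rho X y = int (card ?P) - int (card (left_ext X y))"
    unfolding rho_def by linarith
  also have "card ?P = (\<Sum>a\<in>left_ext X y. card (right_ext X (a # y)))"
    by (rule card_SigmaI) (simp_all add: finite_left_ext finite_right_ext)
  finally show ?thesis
    unfolding rho_def of_nat_sum by (simp add: sum_subtractf)
qed

end

definition left_exts :: "(int \<Rightarrow> 'a) set \<Rightarrow> nat \<Rightarrow> 'a list \<Rightarrow> 'a list set" where
  "left_exts X k y = {x. length x = k \<and> x @ y \<in> lang X}"

lemma left_exts_0: "y \<in> lang X \<Longrightarrow> left_exts X 0 y = {[]}"
  by (auto simp: left_exts_def)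

lemma left_exts_Suc:
  "left_exts X (Suc k) y = (\<lambda>(x, a). a # x) ` (SIGMA x:left_exts X k y. left_ext X (x @ y))"
proof (intro equalityI subsetI)
  fix z assume "z \<in> left_exts X (Suc k) y"
  then obtain a x where z: "z = a # x" "length x = k" "a # x @ y \<in> lang X"
    by (auto simp: left_exts_def length_Suc_conv)
  then have "x \<in> left_exts X k y" "a \<in> left_ext X (x @ y)"
    using lang_appendD[of "[a]" "x @ y"] by (auto simp: left_exts_def left_ext_def)
  with z(1) show "z \<in> (\<lambda>(x, a). a # x) ` (SIGMA x:left_exts X k y. left_ext X (x @ y))"
    by force
qed (auto simp: left_exts_def left_ext_def)

lemma (in finite_shift) finite_left_exts: "finite (left_exts X k y)"
  by (rule finite_subset[OF _ finite_words_length_le[of "k + length y"]])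
    (auto simp: left_exts_def dest: lang_appendD)

context eventually_dendric_shift
begin

lemma rho_eq_sum_left_exts:
  assumes "y \<in> lang X" "m \<le> length y"
  shows "rho X y = (\<Sum>x\<in>left_exts X k y. rho X (x @ y))"
proof (induction k)
  case 0
  show ?case using assms(1) by (simp add: left_exts_0)
next
  case (Suc k)
  have "inj_on (\<lambda>(x, a). a # x) (SIGMA x:left_exts X k y. left_ext X (x @ y))"
    by (auto simp: inj_on_def)
  then have "(\<Sum>z\<in>left_exts X (Suc k) y. rho X (z @ y))
      = (\<Sum>(x, a)\<in>(SIGMA x:left_exts X k y. left_ext X (x @ y)). rho X (a # x @ y))"
    unfolding left_exts_Suc by (subst sum.reindex) (auto intro!: sum.cong)
  also have "\<dots> = (\<Sum>x\<in>left_exts X k y. \<Sum>a\<in>left_ext X (x @ y). rho X (a # x @ y))"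
    by (rule sum.Sigma[symmetric]) (auto simp: finite_left_exts finite_left_ext)
  also have "\<dots> = (\<Sum>x\<in>left_exts X k y. rho X (x @ y))"
    using assms(2) by (intro sum.cong refl rho_eq_sum_left_ext[symmetric]) (auto simp: left_exts_def)
  finally show ?case using Suc.IH by simp
qed

lemma rho_set_lang_n:
  assumes "m \<le> N"
  shows "rho_set X (lang_n X N) = rho_set X (lang_n X m)"
proof -
  let ?S = "SIGMA v:lang_n X m. left_exts X (N - m) v"
  have "inj_on (\<lambda>(v, x). x @ v) ?S"
    by (auto simp: inj_on_def lang_n_def)
  moreover have "lang_n X N = (\<lambda>(v, x). x @ v) ` ?S"
  proof (intro equalityI subsetI)
    fix u assume u: "u \<in> lang_n X N"
    then have "drop (N - m) u \<in> lang_n X m" "take (N - m) u \<in> left_exts X (N - m) (drop (N - m) u)"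
      using assms lang_appendD[of "take (N - m) u" "drop (N - m) u"]
      by (auto simp: lang_n_def left_exts_def)
    then show "u \<in> (\<lambda>(v, x). x @ v) ` ?S"
      by (auto intro!: image_eqI[of _ _ "(drop (N - m) u, take (N - m) u)"])
  qed (use assms in \<open>auto simp: lang_n_def left_exts_def\<close>)
  ultimately have "rho_set X (lang_n X N) = (\<Sum>(v, x)\<in>?S. rho X (x @ v))"
    unfolding rho_set_def by (simp add: sum.reindex case_prod_unfold)
  also have "\<dots> = (\<Sum>v\<in>lang_n X m. \<Sum>x\<in>left_exts X (N - m) v. rho X (x @ v))"
    by (rule sum.Sigma[symmetric]) (auto simp: finite_left_exts finite_lang_n)
  also have "\<dots> = rho_set X (lang_n X m)"
    unfolding rho_set_def
    by (intro sum.cong refl rho_eq_sum_left_exts[symmetric]) (auto simp: lang_n_def)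
  finally show ?thesis .
qed

end

section \<open>Return-free words and return words\<close>

definition return_free :: "(int \<Rightarrow> 'a) set \<Rightarrow> 'a list \<Rightarrow> 'a list set" where
  "return_free X w = {p. w @ p \<in> lang X \<and> word_occ w (w @ p) = {0}}"

lemma return_free_Nil: "w \<in> lang X \<Longrightarrow> [] \<in> return_free X w"
  by (simp add: return_free_def word_occ_self)

lemma return_free_prefix: "p @ q \<in> return_free X w \<Longrightarrow> p \<in> return_free X w"
  using lang_appendD[of "w @ p" q X] word_occ_append_mono[of w "w @ p" q] word_occ_prefix[of w p]
  by (auto simp: return_free_def)

lemma return_free_append_eq:
  assumes "p \<in> return_free X w" "p' \<in> return_free X w" "x @ w @ p = x' @ w @ p'"
  shows "x = x' \<and> p = p'"
proof -
  obtain us where "x = x' @ us \<and> us @ w @ p = w @ p' \<or> x @ us = x' \<and> w @ p = us @ w @ p'"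
    using append_eq_append_conv2[THEN iffD1, OF assms(3)] by blast
  then show ?thesis
  proof
    assume "x = x' @ us \<and> us @ w @ p = w @ p'"
    moreover from this have "length us \<in> word_occ w (w @ p')" by (metis word_occ_middle)
    ultimately show ?thesis using assms(2) by (simp add: return_free_def)
  next
    assume "x @ us = x' \<and> w @ p = us @ w @ p'"
    moreover from this have "length us \<in> word_occ w (w @ p)" by (metis word_occ_middle)
    ultimately show ?thesis using assms(1) by (simp add: return_free_def)
  qed
qed

lemma split_at_last_occurrence:
  assumes u: "u \<in> lang X" and "word_occ w u \<noteq> {}"
  shows "\<exists>x p. u = x @ w @ p \<and> p \<in> return_free X w"
proof -
  define i where "i = Max (word_occ w u)"
  have "i \<in> word_occ w u" unfolding i_def using assms(2) by (rule Max_in[OF word_occ_finite])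
  have last: "j \<le> i" if "j \<in> word_occ w u" for j
    unfolding i_def using word_occ_finite that by (rule Max_ge)
  define p where "p = drop (i + length w) u"
  have "drop i u = take (length w) (drop i u) @ drop (length w) (drop i u)"
    by (rule append_take_drop_id[symmetric])
  then have drop_i: "drop i u = w @ p" and i_le: "i \<le> length u"
    using \<open>i \<in> word_occ w u\<close> by (auto simp: word_occ_def p_def add.commute)
  then have u_eq: "u = take i u @ w @ p" by (metis append_take_drop_id)
  have "w @ p \<in> lang X"
    using u u_eq lang_appendD[of "take i u" "w @ p" X] by simp
  moreover have "word_occ w (w @ p) = {0}"
  proof (intro equalityI subsetI)
    fix j assume "j \<in> word_occ w (w @ p)"
    then have "i + j \<in> word_occ w u" using word_occ_drop[of j w i u] i_le drop_i by simp
    with last show "j \<in> {0}" by fastforce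
  qed (simp add: word_occ_prefix)
  ultimately show ?thesis using u_eq unfolding return_free_def by blast
qed

lemma word_occ_return_free_snoc:
  assumes "p \<in> return_free X w"
  shows "word_occ w (w @ p @ [b]) \<subseteq> {0, Suc (length p)}"
proof
  fix i assume "i \<in> word_occ w (w @ p @ [b])"
  then have "i \<in> word_occ w (w @ p) \<or> i + length w = Suc (length (w @ p))"
    using word_occ_snoc[of i w "w @ p" b] by simp
  with assms show "i \<in> {0, Suc (length p)}" by (auto simp: return_free_def)
qed

lemma return_words_eq:
  "return_words X w =
     (\<lambda>(p, b). p @ [b]) ` (SIGMA p:return_free X w. right_ext X (w @ p)) - return_free X w"
  (is "_ = ?S - _")
proof (intro equalityI subsetI)
  fix u assume "u \<in> return_words X w"
  then have u: "w @ u \<in> lang X" "card (word_occ w (w @ u)) = 2" "u \<noteq> []"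
    "drop (length u) (w @ u) = w"
    by (auto simp: return_words_def complete_return_word_def)
  then obtain p b where ub: "u = p @ [b]" by (cases u rule: rev_exhaust) auto
  have "{0, length u} \<subseteq> word_occ w (w @ u)"
    using u(4) word_occ_prefix[of w u] by (auto simp: word_occ_def)
  then have occ: "word_occ w (w @ u) = {0, length u}"
    using u(2,3) card_subset_eq[OF word_occ_finite] by (metis card_2_iff length_0_conv)
  have "word_occ w (w @ p) \<subseteq> {0}"
    using word_occ_append_mono[of w "w @ p" "[b]"] occ ub by (auto simp: word_occ_def)
  then have "p \<in> return_free X w"
    using u(1) ub lang_appendD[of "w @ p" "[b]" X] word_occ_prefix[of w p]
    by (auto simp: return_free_def)
  moreover have "b \<in> right_ext X (w @ p)" using u(1) ub by (simp add: right_ext_def)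
  moreover have "u \<notin> return_free X w" using occ u(3) by (auto simp: return_free_def)
  ultimately show "u \<in> ?S - return_free X w" using ub by (auto intro!: image_eqI[of _ _ "(p, b)"])
next
  fix u assume "u \<in> ?S - return_free X w"
  then obtain p b where pb: "u = p @ [b]" "p \<in> return_free X w" "w @ p @ [b] \<in> lang X"
    "u \<notin> return_free X w"
    by (auto simp: right_ext_def)
  then have "word_occ w (w @ u) \<noteq> {0}" by (simp add: return_free_def)
  then have occ: "word_occ w (w @ u) = {0, length u}"
    using word_occ_return_free_snoc[OF pb(2), of b] word_occ_prefix[of w u] pb(1) by auto
  then have "length u \<in> word_occ w (w @ u)" by simp
  then have "take (length w) (drop (length u) (w @ u)) = w" unfolding word_occ_def by blast
  then have "drop (length u) (w @ u) = w" by (simp add: take_all)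
  with occ pb show "u \<in> return_words X w"
    by (simp add: return_words_def complete_return_word_def)
qed

lemma (in finite_shift) card_return_words:
  assumes w: "w \<in> lang X" and fin: "finite (return_free X w)"
  shows "finite (return_words X w)
    \<and> int (card (return_words X w)) = 1 + (\<Sum>p\<in>return_free X w. rho X (w @ p))"
proof -
  let ?P = "SIGMA p:return_free X w. right_ext X (w @ p)"
  let ?S = "(\<lambda>(p, b). p @ [b]) ` ?P"
  have finS: "finite ?S" using fin finite_right_ext by simp
  have card_S: "card ?S = (\<Sum>p\<in>return_free X w. card (right_ext X (w @ p)))"
    using fin finite_right_ext by (simp add: card_image inj_on_def)
  have S_Int: "?S \<inter> return_free X w = return_free X w - {[]}"
  proof (intro equalityI subsetI)
    fix q assume q: "q \<in> return_free X w - {[]}"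
    then obtain p b where "q = p @ [b]" by (cases q rule: rev_exhaust) auto
    with q show "q \<in> ?S \<inter> return_free X w"
      using return_free_prefix[of p "[b]" X w] by (force simp: return_free_def right_ext_def)
  qed auto
  have "card (return_free X w - {[]}) + 1 = card (return_free X w)"
    using card_Suc_Diff1[OF fin return_free_Nil[OF w]] by simp
  moreover have "card ?S = card (?S \<inter> return_free X w) + card (return_words X w)"
    unfolding return_words_eq by (rule card_Int_Diff[OF finS])
  ultimately have "card ?S + 1 = card (return_free X w) + card (return_words X w)"
    unfolding S_Int by linarith
  then have "int (card (return_words X w)) = int (card ?S) - int (card (return_free X w)) + 1"
    by linarith
  also have "\<dots> = 1 + (\<Sum>p\<in>return_free X w. rho X (w @ p))"
    unfolding card_S of_nat_sum rho_def by (simp add: sum_subtractf)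
  finally show ?thesis using finS unfolding return_words_eq by simp
qed

section \<open>Recurrence and the sums of \<open>\<rho>\<close> over return-free words\<close>

definition recurrence_bound :: "(int \<Rightarrow> 'a) set \<Rightarrow> 'a list \<Rightarrow> nat \<Rightarrow> bool" where
  "recurrence_bound X w K \<longleftrightarrow> (\<forall>u\<in>lang X. K \<le> length u \<longrightarrow> word_occ w u \<noteq> {})"

lemma recurrence_bound_append: "recurrence_bound X (w @ t) K \<Longrightarrow> recurrence_bound X w K"
  unfolding recurrence_bound_def using word_occ_append_word by blast

text \<open>By irreducibility \<open>w z u \<in> L(X)\<close>; the suffix after the last occurrence of \<open>w\<close>
  there is return-free, hence short, so that occurrence lies inside a long \<open>u\<close>.\<close>

lemma recurrence_bound_if_finite_return_free:
  assumes irr: "irreducible_shift X" and w: "w \<in> lang X" and fin: "finite (return_free X w)"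
  shows "recurrence_bound X w (Suc (length w + Max (length ` return_free X w)))"
  unfolding recurrence_bound_def
proof (intro ballI impI notI)
  fix u assume u: "u \<in> lang X" and long: "Suc (length w + Max (length ` return_free X w)) \<le> length u"
    and none: "word_occ w u = {}"
  obtain z where z: "w @ z @ u \<in> lang X" using irr w u unfolding irreducible_shift_def by blast
  moreover have "word_occ w (w @ z @ u) \<noteq> {}" using word_occ_prefix by blast
  ultimately obtain x p where xp: "w @ z @ u = x @ w @ p" "p \<in> return_free X w"
    using split_at_last_occurrence by blast
  from xp(1) have "(w @ z) @ u = x @ w @ p" by simp
  then obtain us where "w @ z = x @ us \<and> us @ u = w @ p \<or> (w @ z) @ us = x \<and> u = us @ w @ p"
    using append_eq_append_conv2[THEN iffD1] by blast
  then show False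
  proof
    assume "w @ z = x @ us \<and> us @ u = w @ p"
    then have "length (us @ u) = length (w @ p)" by simp
    then have "length u \<le> length w + length p" by simp
    moreover have "length p \<le> Max (length ` return_free X w)" using xp(2) fin by simp
    ultimately show False using long by simp
  next
    assume "(w @ z) @ us = x \<and> u = us @ w @ p"
    then show False using none word_occ_middle by blast
  qed
qed

lemma (in finite_shift) finite_return_free_if_recurrence_bound:
  assumes "recurrence_bound X w K"
  shows "finite (return_free X w)"
proof (rule finite_subset[OF _ finite_words_length_le[of K]])
  have "length p \<le> K" if p: "p \<in> return_free X w" for p
  proof (rule ccontr)
    assume "\<not> length p \<le> K"
    then obtain c q where cq: "p = c # q" "K \<le> length q" by (cases p) auto
    then have "(w @ [c]) @ q \<in> lang X" using p by (simp add: return_free_def)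
    then obtain j where "j \<in> word_occ w q"
      using assms cq(2) lang_appendD unfolding recurrence_bound_def by blast
    then have "length (w @ [c]) + j \<in> word_occ w (w @ p)"
      using word_occ_append_right[of j w q "w @ [c]"] cq(1) by simp
    then show False using p by (simp add: return_free_def)
  qed
  then show "return_free X w \<subseteq> {v \<in> lang X. length v \<le> K}"
    by (auto simp: return_free_def dest: lang_appendD)
qed

text \<open>For \<open>F \<subseteq> return_free X w\<close> the factorisation \<open>x w p\<close> is unique, \<open>w\<close> occurring
  last at position \<open>|x|\<close>.\<close>

definition words_ending_in :: "(int \<Rightarrow> 'a) set \<Rightarrow> 'a list \<Rightarrow> 'a list set \<Rightarrow> nat \<Rightarrow> 'a list set" where
  "words_ending_in X w F N = {x @ w @ p | x p. p \<in> F \<and> x @ w @ p \<in> lang_n X N}"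

lemma words_ending_in_subset: "words_ending_in X w F N \<subseteq> lang_n X N"
  by (auto simp: words_ending_in_def)

lemma words_ending_in_return_free:
  assumes "recurrence_bound X w K" "K \<le> N"
  shows "words_ending_in X w (return_free X w) N = lang_n X N"
proof (intro equalityI subsetI)
  fix u assume u: "u \<in> lang_n X N"
  then have "word_occ w u \<noteq> {}"
    using assms unfolding recurrence_bound_def lang_n_def by auto
  with u obtain x p where "u = x @ w @ p" "p \<in> return_free X w"
    using split_at_last_occurrence[of u X w] by (auto simp: lang_n_def)
  with u show "u \<in> words_ending_in X w (return_free X w) N"
    unfolding words_ending_in_def by blast
qed (rule words_ending_in_subset[THEN subsetD])

context eventually_dendric_shift
begin

lemma rho_set_words_ending_in:
  assumes "m \<le> length w" and F: "finite F" "F \<subseteq> return_free X w"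
    and N: "\<And>p. p \<in> F \<Longrightarrow> length (w @ p) \<le> N"
  shows "rho_set X (words_ending_in X w F N) = (\<Sum>p\<in>F. rho X (w @ p))"
proof -
  let ?S = "SIGMA p:F. left_exts X (N - length (w @ p)) (w @ p)"
  have "inj_on (\<lambda>(p, x). x @ w @ p) ?S"
  proof (rule inj_onI, clarsimp)
    fix p x p' x'
    assume "p \<in> F" "p' \<in> F" "x @ w @ p = x' @ w @ p'"
    with F(2) show "p = p' \<and> x = x'" using return_free_append_eq by blast
  qed
  moreover have "words_ending_in X w F N = (\<lambda>(p, x). x @ w @ p) ` ?S"
  proof (intro equalityI subsetI)
    fix u assume "u \<in> words_ending_in X w F N"
    then obtain x p where "u = x @ w @ p" "p \<in> F" "x @ w @ p \<in> lang_n X N"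
      by (auto simp: words_ending_in_def)
    then show "u \<in> (\<lambda>(p, x). x @ w @ p) ` ?S"
      by (auto simp: lang_n_def left_exts_def intro!: image_eqI[of _ _ "(p, x)"])
  next
    fix u assume "u \<in> (\<lambda>(p, x). x @ w @ p) ` ?S"
    then obtain x p where "u = x @ w @ p" "p \<in> F" "x \<in> left_exts X (N - length (w @ p)) (w @ p)"
      by auto
    with N[of p] have "x @ w @ p \<in> lang_n X N"
      by (auto simp: lang_n_def left_exts_def)
    with \<open>u = x @ w @ p\<close> \<open>p \<in> F\<close> show "u \<in> words_ending_in X w F N"
      unfolding words_ending_in_def by blast
  qed
  ultimately have "rho_set X (words_ending_in X w F N) = (\<Sum>(p, x)\<in>?S. rho X (x @ w @ p))"
    unfolding rho_set_def by (simp add: sum.reindex case_prod_unfold)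
  also have "\<dots> = (\<Sum>p\<in>F. \<Sum>x\<in>left_exts X (N - length (w @ p)) (w @ p). rho X (x @ w @ p))"
    by (rule sum.Sigma[symmetric]) (auto simp: F(1) finite_left_exts)
  also have "\<dots> = (\<Sum>p\<in>F. rho X (w @ p))"
    using F(2) assms(1)
    by (intro sum.cong refl rho_eq_sum_left_exts[symmetric]) (auto simp: return_free_def)
  finally show ?thesis .
qed

lemma sum_rho_return_free_le:
  assumes "m \<le> length w" "finite F" "F \<subseteq> return_free X w"
  shows "(\<Sum>p\<in>F. rho X (w @ p)) \<le> rho_set X (lang_n X m)"
proof -
  define N where "N = length w + (\<Sum>p\<in>F. length p)"
  have N: "length (w @ p) \<le> N" if "p \<in> F" for p
    using member_le_sum[of p F length] that assms(2) by (simp add: N_def)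
  have "(\<Sum>p\<in>F. rho X (w @ p)) = rho_set X (words_ending_in X w F N)"
    using rho_set_words_ending_in[OF assms N] by simp
  also have "\<dots> \<le> rho_set X (lang_n X N)"
    unfolding rho_set_def
    by (rule sum_mono2[OF finite_lang_n words_ending_in_subset]) (auto simp: lang_n_def rho_nonneg)
  also have "\<dots> = rho_set X (lang_n X m)"
    using assms(1) by (intro rho_set_lang_n) (simp add: N_def)
  finally show ?thesis .
qed

lemma sum_rho_return_free:
  assumes "m \<le> length w" and bound: "recurrence_bound X w K"
  shows "(\<Sum>p\<in>return_free X w. rho X (w @ p)) = rho_set X (lang_n X m)"
proof -
  have fin: "finite (return_free X w)"
    using bound by (rule finite_return_free_if_recurrence_bound)
  define N where "N = K + length w + (\<Sum>p\<in>return_free X w. length p)"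
  have N: "length (w @ p) \<le> N" if "p \<in> return_free X w" for p
  proof -
    have "length p \<le> (\<Sum>p\<in>return_free X w. length p)"
      by (rule member_le_sum) (use that fin in auto)
    then show ?thesis by (simp add: N_def)
  qed
  have "(\<Sum>p\<in>return_free X w. rho X (w @ p)) = rho_set X (words_ending_in X w (return_free X w) N)"
    using rho_set_words_ending_in[OF assms(1) fin subset_refl N] by simp
  also have "\<dots> = rho_set X (lang_n X N)"
    using words_ending_in_return_free[OF bound] by (simp add: N_def)
  also have "\<dots> = rho_set X (lang_n X m)"
    using assms(1) by (intro rho_set_lang_n) (simp add: N_def)
  finally show ?thesis .
qed

end

section \<open>Finiteness of the sets of return words\<close>

lemma infinite_prefix_closed_branch:
  assumes "finite A" "infinite S" "\<And>p. p \<in> S \<Longrightarrow> set p \<subseteq> A"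
    and prefix_closed: "\<And>p n. p \<in> S \<Longrightarrow> take n p \<in> S"
  shows "\<exists>p0\<in>S. length p0 = D \<and> (\<forall>n. \<exists>z. length z = n \<and> p0 @ z \<in> S)"
proof -
  have short_finite: "finite {p \<in> S. length p \<le> k}" for k
    by (rule finite_subset[OF _ finite_lists_length_le[OF assms(1), of k]]) (use assms(3) in blast)
  define Q where "Q = {p \<in> S. D \<le> length p}"
  have "S \<subseteq> Q \<union> {p \<in> S. length p \<le> D}" by (auto simp: Q_def)
  then have "infinite Q" using assms(2) finite_subset finite_UnI short_finite by blast
  moreover have "finite (take D ` Q)"
  proof (rule finite_subset[OF _ short_finite[of D]])
    show "take D ` Q \<subseteq> {p \<in> S. length p \<le> D}" using prefix_closed by (auto simp: Q_def)
  qed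
  ultimately obtain p1 where "p1 \<in> Q" and fibre: "infinite {q \<in> Q. take D q = take D p1}"
    using pigeonhole_infinite by blast
  define p0 where "p0 = take D p1"
  have "\<exists>z. length z = n \<and> p0 @ z \<in> S" for n
  proof -
    have "\<not> {q \<in> Q. take D q = take D p1} \<subseteq> {p \<in> S. length p \<le> D + n}"
      using fibre finite_subset[OF _ short_finite] by blast
    then obtain q where q: "q \<in> Q" "take D q = p0" "\<not> length q \<le> D + n"
      unfolding p0_def by (auto simp: Q_def)
    then have "p0 @ take n (drop D q) = take (D + n) q" by (simp add: take_add)
    with q show ?thesis
      using prefix_closed[of q "D + n"] by (intro exI[of _ "take n (drop D q)"]) (auto simp: Q_def)
  qed
  moreover have "p0 \<in> S" "length p0 = D"
    using \<open>p1 \<in> Q\<close> prefix_closed by (auto simp: Q_def p0_def)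
  ultimately show ?thesis by blast
qed

lemma return_free_unique_continuation:
  assumes long: "\<And>n. \<exists>z. length z = n \<and> p0 @ z \<in> return_free X w"
    and unique: "\<And>z. p0 @ z \<in> return_free X w \<Longrightarrow> card (right_ext X (w @ p0 @ z)) = 1"
    and x: "w @ p0 @ x \<in> lang X"
  shows "p0 @ x \<in> return_free X w"
proof -
  obtain Z where Z: "\<And>n. length (Z n) = n \<and> p0 @ Z n \<in> return_free X w"
    using long by metis
  have "\<forall>x. length x = n \<longrightarrow> w @ p0 @ x \<in> lang X \<longrightarrow> x = Z n" for n
  proof (induction n)
    case 0
    then show ?case using Z[of 0] by simp
  next
    case (Suc n)
    show ?case
    proof (intro allI impI)
      fix x assume "length x = Suc n" "w @ p0 @ x \<in> lang X"
      then obtain x' b where x: "x = x' @ [b]" "length x' = n" "w @ p0 @ x' @ [b] \<in> lang X"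
        by (auto simp: length_Suc_conv_rev)
      obtain z' c where z: "Z (Suc n) = z' @ [c]" "length z' = n"
        using Z[of "Suc n"] by (auto simp: length_Suc_conv_rev)
      then have "p0 @ z' \<in> return_free X w" "w @ p0 @ z' @ [c] \<in> lang X"
        using Z[of "Suc n"] return_free_prefix[of "p0 @ z'" "[c]" X w]
        by (auto simp: return_free_def)
      moreover have "w @ p0 @ x' \<in> lang X" "w @ p0 @ z' \<in> lang X"
        using x(3) calculation(2) lang_appendD[of "w @ p0 @ x'" "[b]" X]
          lang_appendD[of "w @ p0 @ z'" "[c]" X] by auto
      ultimately have "x' = Z n" "z' = Z n"
        using Suc.IH x(2) z(2) by blast+
      with \<open>p0 @ z' \<in> return_free X w\<close> have "card (right_ext X (w @ p0 @ Z n)) = 1"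
        using unique by simp
      moreover have "b \<in> right_ext X (w @ p0 @ Z n)" "c \<in> right_ext X (w @ p0 @ Z n)"
        using x(3) \<open>w @ p0 @ z' @ [c] \<in> lang X\<close> \<open>x' = Z n\<close> \<open>z' = Z n\<close>
        by (auto simp: right_ext_def)
      ultimately have "b = c" by (auto simp: card_Suc_eq)
      with x(1) z(1) \<open>x' = Z n\<close> \<open>z' = Z n\<close> show "x = Z (Suc n)" by simp
    qed
  qed
  with x Z[of "length x"] show ?thesis by auto
qed

context eventually_dendric_shift
begin

lemma finite_return_free_positive_rho:
  assumes "m \<le> length w"
  shows "finite {p \<in> return_free X w. 0 < rho X (w @ p)}" (is "finite ?B")
proof (rule ccontr)
  assume "infinite ?B"
  then obtain F where F: "F \<subseteq> ?B" "finite F" "card F = Suc (nat (rho_set X (lang_n X m)))"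
    using infinite_arbitrarily_large by blast
  have "(\<Sum>p\<in>F. 1::int) \<le> (\<Sum>p\<in>F. rho X (w @ p))"
    by (rule sum_mono) (use F(1) in auto)
  then have "int (card F) \<le> (\<Sum>p\<in>F. rho X (w @ p))" by simp
  also have "\<dots> \<le> rho_set X (lang_n X m)"
    using sum_rho_return_free_le[OF assms F(2)] F(1) by blast
  finally show False using F(3) by linarith
qed

lemma finite_return_free_long:
  assumes irr: "irreducible_shift X" and w: "w \<in> lang X" and "m \<le> length w"
  shows "finite (return_free X w)"
proof (rule ccontr)
  assume inf: "infinite (return_free X w)"
  have "finite (length ` {p \<in> return_free X w. 0 < rho X (w @ p)})"
    using finite_return_free_positive_rho[OF assms(3)] by simp
  then obtain D where D: "\<And>p. p \<in> return_free X w \<Longrightarrow> 0 < rho X (w @ p) \<Longrightarrow> length p < D"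
    unfolding finite_nat_set_iff_bounded by auto
  \<comment> \<open>\<open>Suc D\<close> rather than \<open>D\<close> makes \<open>p0\<close> nonempty, so that the occurrence of \<open>w\<close>
    produced at the end is not the prefix one.\<close>
  have "\<exists>p0\<in>return_free X w. length p0 = Suc D
      \<and> (\<forall>n. \<exists>z. length z = n \<and> p0 @ z \<in> return_free X w)"
  proof (rule infinite_prefix_closed_branch[OF finite_alphabet inf])
    show "set p \<subseteq> A" if "p \<in> return_free X w" for p
      using that lang_subset_alphabet[of "w @ p"] by (simp add: return_free_def)
    show "take n p \<in> return_free X w" if "p \<in> return_free X w" for p n
      using that return_free_prefix[of "take n p" "drop n p"] by simp
  qed
  then obtain p0 where p0: "p0 \<in> return_free X w" "length p0 = Suc D"
    and long: "\<And>n. \<exists>z. length z = n \<and> p0 @ z \<in> return_free X w" by blast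
  have "card (right_ext X (w @ p0 @ z)) = 1" if "p0 @ z \<in> return_free X w" for z
  proof -
    have "rho X (w @ p0 @ z) \<le> 0" using D[OF that] p0(2) by fastforce
    moreover have "0 \<le> rho X (w @ p0 @ z)"
      using that rho_nonneg by (simp add: return_free_def)
    ultimately show ?thesis by (simp add: rho_def)
  qed
  moreover obtain z where "w @ p0 @ z @ w \<in> lang X"
    using irr w p0(1) unfolding irreducible_shift_def return_free_def by force
  ultimately have "p0 @ z @ w \<in> return_free X w"
    using return_free_unique_continuation[OF long] by blast
  moreover have "length (w @ p0 @ z) \<in> word_occ w (w @ p0 @ z @ w)"
    using word_occ_middle[of "w @ p0 @ z" w "[]"] by simp
  ultimately show False using p0(2) by (simp add: return_free_def)
qed

lemma finite_return_free:
  assumes irr: "irreducible_shift X" and w: "w \<in> lang X"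
  shows "finite (return_free X w)"
proof -
  obtain t where t: "length t = m" "w @ t \<in> lang X"
    using lang_append_exists[OF w] by blast
  then have "finite (return_free X (w @ t))"
    using finite_return_free_long[OF irr] by simp
  with irr t(2) have "recurrence_bound X (w @ t)
      (Suc (length (w @ t) + Max (length ` return_free X (w @ t))))"
    by (rule recurrence_bound_if_finite_return_free)
  then show ?thesis
    by (rule finite_return_free_if_recurrence_bound[OF recurrence_bound_append])
qed

end

theorem mainTheorem12:
  fixes A :: "'a set" and X :: "(int \<Rightarrow> 'a) set" and m :: nat
  assumes "shift_space A X"
    and "irreducible_shift X"
    and "eventually_dendric X m"
  shows "(\<forall>w\<in>lang X. finite (return_words X w))
    \<and> (\<forall>w\<in>lang_ge X m. int (card (return_words X w)) = 1 + rho_set X (lang_n X m))"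
proof -
  interpret eventually_dendric_shift A X m
    using assms(1,3) by unfold_locales
  have count: "finite (return_words X w)
      \<and> int (card (return_words X w)) = 1 + (\<Sum>p\<in>return_free X w. rho X (w @ p))"
    if "w \<in> lang X" for w
    using card_return_words[OF that finite_return_free[OF assms(2) that]] .
  have "(\<Sum>p\<in>return_free X w. rho X (w @ p)) = rho_set X (lang_n X m)"
    if "w \<in> lang X" "m \<le> length w" for w
    using sum_rho_return_free[OF that(2) recurrence_bound_if_finite_return_free]
      finite_return_free assms(2) that(1) by blast
  with count show ?thesis by (auto simp: lang_ge_def)
qed

end
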